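(* Let $R=\mathbb{F}_q+v\mathbb{F}_q+v^2\mathbb{F}_q$ with $v^3=v$, and let $C=vC_1\oplus(1-v)C_2\oplus(1-v^2)C_3$ be a cyclic code of length $n$ over $R$, where $C_1,C_2,C_3$ are cyclic codes of length $n$ over $\mathbb{F}_q$ with $C_i=\langle f_i\rangle\subseteq\mathbb{F}_q[x]/\langle x^n-1\rangle$, $f_i\in\mathbb{F}_q[x]$, $f_i\mid x^n-1$ ($i=1,2,3$). Then, identifying codes with ideals of $R[x]/\langle x^n-1\rangle$, $C=\langle vf_1,(1-v)f_2,(1-v^2)f_3\rangle$ and $|C|=q^{3n-(\deg f_1+\deg f_2+\deg f_3)}$.
   Context: $q$ is a prime power and $R=\mathbb{F}_q[v]/\langle v^3-v\rangle$. $vC_1\oplus(1-v)C_2\oplus(1-v^2)C_3$ denotes $\{va+(1-v)b+(1-v^2)d:a\in C_1,b\in C_2,d\in C_3\}$. A code is cyclic if it is closed under the cyclic shift $(c_0,\dots,c_{n-1})\mapsto(c_{n-1},c_0,\dots,c_{n-2})$; cyclic codes of length $n$ are identified with ideals of $R[x]/\langle x^n-1\rangle$ (resp. $\mathbb{F}_q[x]/\langle x^n-1\rangle$) via $(c_0,\dots,c_{n-1})\mapsto\sum c_ix^i$. *)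

theory Defs
  imports "HOL-Computational_Algebra.Polynomial"
begin

text \<open>An element VR a b c represents a + b v + c v^2, with v^3 = v.\<close>

datatype 'a vring = VR 'a 'a 'a

instantiation vring :: (comm_ring_1) comm_ring_1
begin


definition "0 = VR 0 0 0"
definition "1 = VR 1 0 0"
fun plus_vring :: "'a vring \<Rightarrow> 'a vring \<Rightarrow> 'a vring" where
  "plus_vring (VR a b c) (VR a' b' c') = VR (a + a') (b + b') (c + c')"
fun minus_vring :: "'a vring \<Rightarrow> 'a vring \<Rightarrow> 'a vring" where
  "minus_vring (VR a b c) (VR a' b' c') = VR (a - a') (b - b') (c - c')"
fun uminus_vring :: "'a vring \<Rightarrow> 'a vring" where
  "uminus_vring (VR a b c) = VR (- a) (- b) (- c)"
fun times_vring :: "'a vring \<Rightarrow> 'a vring \<Rightarrow> 'a vring" where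
  "times_vring (VR a b c) (VR a' b' c') =
     VR (a * a') (a * b' + b * a' + b * c' + c * b') (a * c' + b * b' + c * a' + c * c')"

instance
proof
  fix x y z :: "'a vring"
  show "x * y * z = x * (y * z)"
    by (cases x; cases y; cases z) (simp add: algebra_simps)
  show "x * y = y * x"
    by (cases x; cases y) (simp add: algebra_simps)
  show "1 * x = x" by (cases x) (simp add: one_vring_def)
  show "(x + y) * z = x * z + y * z"
    by (cases x; cases y; cases z) (simp add: algebra_simps)
  show "x + y + z = x + (y + z)"
    by (cases x; cases y; cases z) (simp add: algebra_simps)
  show "x + y = y + x" by (cases x; cases y) (simp add: algebra_simps)
  show "0 + x = x" by (cases x) (simp add: zero_vring_def)
  show "- x + x = 0" by (cases x) (simp add: zero_vring_def)
  show "x - y = x + - y" by (cases x; cases y) simp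
  show "(0::'a vring) \<noteq> 1" by (simp add: zero_vring_def one_vring_def)
qed

end

definition vv :: "'a::comm_ring_1 vring" where "vv = VR 0 1 0"
definition emb :: "'a::comm_ring_1 \<Rightarrow> 'a vring" where "emb a = VR a 0 0"

lemma vv_cube: "(vv :: 'a::comm_ring_1 vring) ^ 3 = vv"
  by (simp add: vv_def numeral_3_eq_3 one_vring_def)

text \<open>Codewords are lists of length n; (c_0,...,c_{n-1}) corresponds to \<Sum> c_i x^i = Poly c.\<close>

definition cshift :: "'b list \<Rightarrow> 'b list" where
  "cshift xs = (if xs = [] then [] else last xs # butlast xs)"

definition linear_code :: "nat \<Rightarrow> 'b::comm_ring_1 list set \<Rightarrow> bool" where
  "linear_code n C \<longleftrightarrow> C \<subseteq> {c. length c = n} \<and> replicate n 0 \<in> C \<and>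
     (\<forall>c\<in>C. \<forall>d\<in>C. map2 (+) c d \<in> C) \<and> (\<forall>r. \<forall>c\<in>C. map ((*) r) c \<in> C)"

definition cyclic_code :: "nat \<Rightarrow> 'b::comm_ring_1 list set \<Rightarrow> bool" where
  "cyclic_code n C \<longleftrightarrow> linear_code n C \<and> (\<forall>c\<in>C. cshift c \<in> C)"

text \<open>The ideal of B[x]/(x^n - 1) generated by the polynomials in G, viewed as a set of
  codewords (representatives of degree < n).\<close>
definition ideal_code :: "nat \<Rightarrow> 'b::comm_ring_1 poly list \<Rightarrow> 'b list set" where
  "ideal_code n G = {c. length c = n \<and>
     (\<exists>hs k. length hs = length G \<and>
        Poly c = sum_list (map2 (*) G hs) + k * (monom 1 n - 1))}"

definition vsum_code :: "nat \<Rightarrow> 'a::comm_ring_1 list set \<Rightarrow> 'a list set \<Rightarrow> 'a list set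
    \<Rightarrow> 'a vring list set" where
  "vsum_code n C1 C2 C3 =
     {map (\<lambda>i. vv * emb (a ! i) + (1 - vv) * emb (b ! i) + (1 - vv ^ 2) * emb (d ! i)) [0..<n]
       | a b d. a \<in> C1 \<and> b \<in> C2 \<and> d \<in> C3}"

end

theory Submission
  imports Defs
begin

text \<open>Codewords are read as polynomials of degree below n, compared modulo x^n - 1.
  By the definition of vsum_code, every codeword of C is v a + (1 - v) b + (1 - v^2) d with
  f1 | a, f2 | b, f3 | d, which places it in the ideal generated by v f1, (1 - v) f2,
  (1 - v^2) f3. Conversely, C is R-linear (this is all that cyclicity of C is used for), so it
  suffices that every multiple g H of a generator is congruent to a codeword; writing
  H = A + v B + v^2 D with A, B, D over F_q reduces this to v f1 g with g over F_q, which is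
  congruent to the codeword v ((f1 g) mod (x^n - 1)).

  For the count, (a, b, d) \<mapsto> v a + (1 - v) b + (1 - v^2) d is injective, since coordinatewise
  it produces (b_i + d_i) + (a_i - b_i) v - d_i v^2; hence |C| = |C1| |C2| |C3|, and the
  codewords divisible by f are exactly f g with deg g < n - deg f, so |C_i| = q^(n - deg f_i).\<close>

abbreviation emb_poly :: "'a::comm_ring_1 poly \<Rightarrow> 'a vring poly" where
  "emb_poly \<equiv> map_poly emb"

lemma emb_0 [simp]: "emb 0 = 0" by (simp add: emb_def zero_vring_def)
lemma emb_1 [simp]: "emb 1 = 1" by (simp add: emb_def one_vring_def)
lemma emb_add [simp]: "emb (a + b) = emb a + emb b" by (simp add: emb_def)
lemma emb_diff [simp]: "emb (a - b) = emb a - emb b" by (simp add: emb_def)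
lemma emb_mult [simp]: "emb (a * b) = emb a * emb b" by (simp add: emb_def)

lemma emb_poly_add: "emb_poly (p + q) = emb_poly p + emb_poly q"
  by (rule poly_eqI) (simp add: coeff_map_poly)

lemma emb_poly_diff: "emb_poly (p - q) = emb_poly p - emb_poly q"
  by (rule poly_eqI) (simp add: coeff_map_poly)

lemma emb_poly_mult: "emb_poly (p * q) = emb_poly p * emb_poly q"
  by (induction p) (simp_all add: emb_poly_add map_poly_smult map_poly_pCons)

lemma emb_poly_monom_1_minus_1: "emb_poly (monom 1 n - 1) = monom 1 n - 1"
  by (simp add: emb_poly_diff map_poly_monom)

lemma emb_poly_dvd: "p dvd q \<Longrightarrow> emb_poly p dvd emb_poly q"
  by (auto simp: emb_poly_mult elim: dvdE)

definition coeff_list :: "nat \<Rightarrow> 'a::zero poly \<Rightarrow> 'a list" where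
  "coeff_list n p = map (coeff p) [0..<n]"

lemma length_coeff_list [simp]: "length (coeff_list n p) = n"
  by (simp add: coeff_list_def)

lemma coeff_list_Poly: "length c = n \<Longrightarrow> coeff_list n (Poly c) = c"
  by (rule nth_equalityI) (auto simp: coeff_list_def nth_default_nth)

lemma Poly_coeff_list: "degree p < n \<or> p = 0 \<Longrightarrow> Poly (coeff_list n p) = p"
  by (rule poly_eqI) (auto simp: coeff_list_def nth_default_def coeff_eq_0)

lemma degree_Poly_less:
  assumes "length c = n" "n > 0"
  shows "degree (Poly c) < n"
proof -
  have "degree (Poly c) \<le> n - 1"
    by (rule degree_le) (use assms in \<open>auto simp: nth_default_def\<close>)
  with assms(2) show ?thesis by linarith
qed

lemma degree_monom_1_minus_1:
  assumes "n > 0"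
  shows "degree (monom (1::'a::comm_ring_1) n - 1) = n"
proof (rule antisym)
  show "degree (monom (1::'a) n - 1) \<le> n"
    by (rule degree_le) (auto simp: coeff_monom)
  show "n \<le> degree (monom (1::'a) n - 1)"
    by (rule le_degree) (use assms in simp)
qed

lemma monom_1_minus_1_neq_0: "n > 0 \<Longrightarrow> monom 1 n - 1 \<noteq> (0 :: 'a::comm_ring_1 poly)"
  using degree_monom_1_minus_1[of n, where 'a='a] by auto

lemma degree_le_if_dvd_monom_1_minus_1:
  fixes f :: "'a::field poly"
  assumes "n > 0" "f dvd monom 1 n - 1"
  shows "degree f \<le> n"
  using dvd_imp_degree_le[OF assms(2) monom_1_minus_1_neq_0[OF assms(1)]]
    degree_monom_1_minus_1[OF assms(1), where 'a='a] by linarith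

lemma codeword_eqI:
  fixes c d :: "'a::comm_ring_1 list"
  assumes "length c = n" "length d = n" "monom 1 n - 1 dvd Poly c - Poly d"
  shows "c = d"
proof (cases "n = 0")
  case True
  with assms show ?thesis by simp
next
  case False
  obtain K where K: "Poly c - Poly d = (monom 1 n - 1) * K"
    using assms(3) by (elim dvdE)
  have "K = 0"
  proof (rule ccontr)
    assume "K \<noteq> 0"
    have "coeff (Poly c - Poly d) (n + degree K) = lead_coeff K"
      using K coeff_mult_degree_sum[of "monom 1 n - 1" K] False
      by (simp add: degree_monom_1_minus_1)
    moreover have "coeff (Poly c - Poly d) (n + degree K) = 0"
      using assms(1,2) by (simp add: nth_default_def)
    ultimately show False
      using \<open>K \<noteq> 0\<close> by simp
  qed
  then have "Poly c = Poly d"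
    using K by simp
  then show ?thesis
    using assms(1,2) by (metis coeff_list_Poly)
qed

definition codeword_polys :: "nat \<Rightarrow> 'a::comm_ring_1 list set \<Rightarrow> 'a poly set" where
  "codeword_polys n C = {p. \<exists>c\<in>C. monom 1 n - 1 dvd p - Poly c}"

lemma Poly_in_codeword_polys: "c \<in> C \<Longrightarrow> Poly c \<in> codeword_polys n C"
  unfolding codeword_polys_def by force

lemma codeword_polys_cong:
  assumes "p \<in> codeword_polys n C" "monom 1 n - 1 dvd q - p"
  shows "q \<in> codeword_polys n C"
proof -
  obtain c where "c \<in> C" "monom 1 n - 1 dvd p - Poly c"
    using assms(1) unfolding codeword_polys_def by blast
  moreover have "q - Poly c = (q - p) + (p - Poly c)"
    by simp
  ultimately show ?thesis
    using assms(2) unfolding codeword_polys_def by (metis (mono_tags) dvd_add mem_Collect_eq)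
qed

lemma codeword_polys_add:
  assumes "linear_code n C" "p \<in> codeword_polys n C" "q \<in> codeword_polys n C"
  shows "p + q \<in> codeword_polys n C"
proof -
  obtain c d where cd: "c \<in> C" "d \<in> C"
    and "monom 1 n - 1 dvd p - Poly c" "monom 1 n - 1 dvd q - Poly d"
    using assms(2,3) unfolding codeword_polys_def by blast
  then have "monom 1 n - 1 dvd (p + q) - (Poly c + Poly d)"
    by (metis (no_types) add_diff_add dvd_add)
  moreover have "map2 (+) c d \<in> C" "Poly (map2 (+) c d) = Poly c + Poly d"
    using assms(1) cd unfolding linear_code_def
    by (auto intro!: poly_eqI simp: nth_default_def subset_iff)
  ultimately show ?thesis
    by (metis Poly_in_codeword_polys codeword_polys_cong)
qed

lemma codeword_polys_smult:
  assumes "linear_code n C" "p \<in> codeword_polys n C"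
  shows "smult r p \<in> codeword_polys n C"
proof -
  obtain c where c: "c \<in> C" and "monom 1 n - 1 dvd p - Poly c"
    using assms(2) unfolding codeword_polys_def by blast
  then have "monom 1 n - 1 dvd smult r p - smult r (Poly c)"
    by (metis dvd_smult smult_diff_right)
  moreover have "map ((*) r) c \<in> C" "Poly (map ((*) r) c) = smult r (Poly c)"
    using assms(1) c unfolding linear_code_def
    by (auto intro!: poly_eqI simp: nth_default_def)
  ultimately show ?thesis
    by (metis Poly_in_codeword_polys codeword_polys_cong)
qed

lemma codeword_polys_sum_list:
  assumes "linear_code n C" "set ps \<subseteq> codeword_polys n C"
  shows "sum_list ps \<in> codeword_polys n C"
  using assms(2)
proof (induction ps)
  case Nil
  have "replicate n 0 \<in> C"
    using assms(1) unfolding linear_code_def by blast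
  then show ?case
    using Poly_in_codeword_polys by fastforce
next
  case (Cons p ps)
  then show ?case
    using codeword_polys_add[OF assms(1)] by simp
qed

lemma codeword_polys_codeword:
  assumes "linear_code n C" "length c = n" "Poly c \<in> codeword_polys n C"
  shows "c \<in> C"
proof -
  obtain d where "d \<in> C" "monom 1 n - 1 dvd Poly c - Poly d"
    using assms(3) unfolding codeword_polys_def by blast
  moreover have "length d = n"
    using assms(1) \<open>d \<in> C\<close> unfolding linear_code_def by blast
  ultimately show ?thesis
    using assms(2) codeword_eqI by metis
qed

lemma ideal_code_subset:
  assumes "linear_code n C"
    and "\<And>g h. g \<in> set G \<Longrightarrow> g * h \<in> codeword_polys n C"
  shows "ideal_code n G \<subseteq> C"
proof
  fix c
  assume "c \<in> ideal_code n G"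
  then obtain hs K where c: "length c = n"
    and Poly_c: "Poly c = sum_list (map2 (*) G hs) + K * (monom 1 n - 1)"
    unfolding ideal_code_def by blast
  have "set (map2 (*) G hs) \<subseteq> codeword_polys n C"
    using assms(2) by (auto dest: set_zip_leftD)
  then have "sum_list (map2 (*) G hs) \<in> codeword_polys n C"
    by (rule codeword_polys_sum_list[OF assms(1)])
  then have "Poly c \<in> codeword_polys n C"
    by (rule codeword_polys_cong) (simp add: Poly_c)
  then show "c \<in> C"
    by (rule codeword_polys_codeword[OF assms(1) c])
qed

lemma mem_ideal_code_singleton_iff:
  "c \<in> ideal_code n [f] \<longleftrightarrow> length c = n \<and> (\<exists>h K. Poly c = f * h + K * (monom 1 n - 1))"
proof
  assume "c \<in> ideal_code n [f]"
  then obtain hs K where c: "length c = n" "length hs = 1"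
    and Poly_c: "Poly c = sum_list (map2 (*) [f] hs) + K * (monom 1 n - 1)"
    unfolding ideal_code_def by auto
  then obtain h where "hs = [h]"
    by (cases hs) auto
  with c Poly_c show "length c = n \<and> (\<exists>h K. Poly c = f * h + K * (monom 1 n - 1))"
    by auto
next
  assume "length c = n \<and> (\<exists>h K. Poly c = f * h + K * (monom 1 n - 1))"
  then obtain h K where "length c = n" "Poly c = f * h + K * (monom 1 n - 1)"
    by blast
  then show "c \<in> ideal_code n [f]"
    unfolding ideal_code_def by (auto intro!: exI[of _ "[h]"])
qed

lemma ideal_code_principal:
  assumes "f dvd monom 1 n - 1"
  shows "ideal_code n [f] = {c. length c = n \<and> f dvd Poly c}"
proof (intro set_eqI iffI)
  fix c
  assume "c \<in> ideal_code n [f]"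
  then show "c \<in> {c. length c = n \<and> f dvd Poly c}"
    using assms by (auto simp: mem_ideal_code_singleton_iff)
next
  fix c
  assume "c \<in> {c. length c = n \<and> f dvd Poly c}"
  then obtain g where "length c = n" "Poly c = f * g"
    by (auto elim: dvdE)
  then show "c \<in> ideal_code n [f]"
    unfolding mem_ideal_code_singleton_iff by (intro conjI exI[of _ g] exI[of _ 0]) simp_all
qed

lemma ideal_code_principal_reduce:
  fixes f p :: "'a::field poly"
  assumes "n > 0" "f dvd monom 1 n - 1" "f dvd p"
  obtains c where "c \<in> ideal_code n [f]" "monom 1 n - 1 dvd p - Poly c"
proof
  let ?Q = "monom 1 n - 1 :: 'a poly"
  have "?Q \<noteq> 0"
    by (rule monom_1_minus_1_neq_0[OF assms(1)])
  then have "Poly (coeff_list n (p mod ?Q)) = p mod ?Q"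
    using degree_mod_less[of ?Q p] degree_monom_1_minus_1[OF assms(1), where 'a='a]
    by (intro Poly_coeff_list) argo
  moreover have "f dvd p mod ?Q"
    using assms(2,3) by (simp add: dvd_mod)
  ultimately show "coeff_list n (p mod ?Q) \<in> ideal_code n [f]"
    by (simp add: ideal_code_principal[OF assms(2)])
  show "?Q dvd p - Poly (coeff_list n (p mod ?Q))"
    using \<open>Poly (coeff_list n (p mod ?Q)) = p mod ?Q\<close> by (simp add: minus_mod_eq_mult_div)
qed

lemma card_codewords_dvd:
  fixes f :: "'a::{finite, field} poly"
  assumes "f \<noteq> 0" "degree f \<le> n"
  shows "card {c. length c = n \<and> f dvd Poly c} = card (UNIV :: 'a set) ^ (n - degree f)"
proof -
  let ?m = "n - degree f"
  let ?enc = "\<lambda>g. coeff_list n (f * Poly g)"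
  have Poly_enc: "Poly (?enc g) = f * Poly g" if "length g = ?m" for g
  proof (cases "Poly g = 0")
    case False
    then have "g \<noteq> []" by auto
    then have "degree (Poly g) < ?m"
      using that by (intro degree_Poly_less) (auto simp: length_greater_0_conv[symmetric])
    then show ?thesis
      using False assms by (intro Poly_coeff_list) (simp add: degree_mult_eq)
  qed (simp add: Poly_coeff_list)
  have "inj_on ?enc {g. length g = ?m}"
  proof (rule inj_onI)
    fix g g'
    assume g: "g \<in> {g. length g = ?m}" and g': "g' \<in> {g. length g = ?m}"
      and enc: "?enc g = ?enc g'"
    have "f * Poly g = Poly (?enc g)"
      using g Poly_enc by simp
    also have "\<dots> = f * Poly g'"
      using g' Poly_enc by (simp only: enc mem_Collect_eq)
    finally have "f * Poly g = f * Poly g'" .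
    with assms(1) have "Poly g = Poly g'" by simp
    then show "g = g'"
      using g g' by (metis coeff_list_Poly mem_Collect_eq)
  qed
  moreover have "?enc ` {g. length g = ?m} = {c. length c = n \<and> f dvd Poly c}"
  proof (intro set_eqI iffI)
    fix c
    assume "c \<in> ?enc ` {g. length g = ?m}"
    then obtain g where "length g = ?m" "c = ?enc g"
      by blast
    then show "c \<in> {c. length c = n \<and> f dvd Poly c}"
      using Poly_enc[of g] by simp
  next
    fix c
    assume "c \<in> {c. length c = n \<and> f dvd Poly c}"
    then obtain h where c: "length c = n" "Poly c = f * h"
      by (auto elim: dvdE)
    have "degree h < ?m \<or> h = 0"
    proof (cases "h = 0")
      case False
      then have "n > 0"
        using c assms(1) by (cases c) auto
      then have "degree (f * h) < n"
        using c degree_Poly_less by metis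
      with False assms(1) show ?thesis
        by (simp add: degree_mult_eq)
    qed simp
    then have "Poly (coeff_list ?m h) = h"
      by (rule Poly_coeff_list)
    then have "?enc (coeff_list ?m h) = c"
      using c coeff_list_Poly[OF c(1)] by simp
    then show "c \<in> ?enc ` {g. length g = ?m}"
      by (intro image_eqI[of _ _ "coeff_list ?m h"]) auto
  qed
  ultimately have "card {c. length c = n \<and> f dvd Poly c} = card {g :: 'a list. length g = ?m}"
    by (intro bij_betw_same_card[symmetric]) (simp add: bij_betw_def)
  also have "\<dots> = card (UNIV :: 'a set) ^ ?m"
    using card_lists_length_eq[of "UNIV :: 'a set" ?m] by simp
  finally show ?thesis .
qed

lemma card_ideal_code_principal:
  fixes f :: "'a::{finite, field} poly"
  assumes "n > 0" "f dvd monom 1 n - 1"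
  shows "card (ideal_code n [f]) = card (UNIV :: 'a set) ^ (n - degree f)"
proof -
  have "f \<noteq> 0"
    using assms monom_1_minus_1_neq_0 by (metis dvd_0_left)
  then show ?thesis
    using assms by (simp add: ideal_code_principal card_codewords_dvd degree_le_if_dvd_monom_1_minus_1)
qed

lemma VR_eq_combination:
  "VR (b + d) (a - b) (- d) = vv * emb a + (1 - vv) * emb b + (1 - vv ^ 2) * emb d"
  by (simp add: vv_def emb_def one_vring_def power2_eq_square)

fun vr0 :: "'a vring \<Rightarrow> 'a" where "vr0 (VR a b c) = a"
fun vr1 :: "'a vring \<Rightarrow> 'a" where "vr1 (VR a b c) = b"
fun vr2 :: "'a vring \<Rightarrow> 'a" where "vr2 (VR a b c) = c"

lemma vr_0 [simp]: "vr0 0 = 0" "vr1 0 = 0" "vr2 0 = 0"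
  by (simp_all add: zero_vring_def)

lemma vring_poly_decomp:
  "H = emb_poly (map_poly vr0 H) + smult vv (emb_poly (map_poly vr1 H))
       + smult (vv ^ 2) (emb_poly (map_poly vr2 H))"
proof (rule poly_eqI)
  fix i
  obtain a b c where "coeff H i = VR a b c" by (cases "coeff H i")
  then show "coeff H i = coeff (emb_poly (map_poly vr0 H) + smult vv (emb_poly (map_poly vr1 H))
       + smult (vv ^ 2) (emb_poly (map_poly vr2 H))) i"
    by (simp add: coeff_map_poly) (simp add: vv_def emb_def power2_eq_square)
qed

definition vsum_word :: "nat \<Rightarrow> 'a::comm_ring_1 list \<Rightarrow> 'a list \<Rightarrow> 'a list \<Rightarrow> 'a vring list" where
  "vsum_word n a b d =
     map (\<lambda>i. vv * emb (a ! i) + (1 - vv) * emb (b ! i) + (1 - vv ^ 2) * emb (d ! i)) [0..<n]"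

definition vsum_generators :: "'a::comm_ring_1 poly \<Rightarrow> 'a poly \<Rightarrow> 'a poly \<Rightarrow> 'a vring poly list" where
  "vsum_generators f1 f2 f3 =
     [[:vv:] * emb_poly f1, [:1 - vv:] * emb_poly f2, [:1 - vv ^ 2:] * emb_poly f3]"

lemma vsum_code_eq_image:
  "vsum_code n C1 C2 C3 = (\<lambda>(a, b, d). vsum_word n a b d) ` (C1 \<times> C2 \<times> C3)"
  unfolding vsum_code_def vsum_word_def by force

lemma nth_vsum_word:
  "i < n \<Longrightarrow> vsum_word n a b d ! i = VR (b ! i + d ! i) (a ! i - b ! i) (- (d ! i))"
  by (simp add: vsum_word_def VR_eq_combination)

lemma vsum_word_inject:
  assumes "vsum_word n a b d = vsum_word n a' b' d'"
    and "length a = n" "length b = n" "length d = n"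
    and "length a' = n" "length b' = n" "length d' = n"
  shows "a = a' \<and> b = b' \<and> d = d'"
proof -
  have "a ! i = a' ! i \<and> b ! i = b' ! i \<and> d ! i = d' ! i" if "i < n" for i
  proof -
    have "VR (b ! i + d ! i) (a ! i - b ! i) (- (d ! i)) = VR (b' ! i + d' ! i) (a' ! i - b' ! i) (- (d' ! i))"
      using assms(1) that by (metis nth_vsum_word)
    then have eq: "b ! i + d ! i = b' ! i + d' ! i" "a ! i - b ! i = a' ! i - b' ! i"
      and "- (d ! i) = - (d' ! i)"
      unfolding vring.inject by blast+
    then have "d ! i = d' ! i"
      by simp
    moreover from eq(1) \<open>d ! i = d' ! i\<close> have "b ! i = b' ! i"
      by simp
    moreover from eq(2) \<open>b ! i = b' ! i\<close> have "a ! i = a' ! i"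
      by simp
    ultimately show ?thesis
      by blast
  qed
  with assms(2-7) show ?thesis
    by (simp add: list_eq_iff_nth_eq)
qed

lemma card_vsum_code:
  assumes "\<forall>c \<in> C1 \<union> C2 \<union> C3. length c = n"
  shows "card (vsum_code n C1 C2 C3) = card C1 * card C2 * card C3"
proof -
  have "inj_on (\<lambda>(a, b, d). vsum_word n a b d) (C1 \<times> C2 \<times> C3)"
    unfolding inj_on_def using assms by (auto dest!: vsum_word_inject)
  then show ?thesis
    by (simp add: vsum_code_eq_image card_image card_cartesian_product)
qed

lemma Poly_vsum_word:
  assumes "length a = n" "length b = n" "length d = n"
  shows "Poly (vsum_word n a b d) = smult vv (emb_poly (Poly a)) + smult (1 - vv) (emb_poly (Poly b))
    + smult (1 - vv ^ 2) (emb_poly (Poly d))"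
  by (rule poly_eqI) (use assms in \<open>auto simp: vsum_word_def nth_default_def coeff_map_poly\<close>)

lemma vsum_code_subset_ideal_code:
  "vsum_code n (ideal_code n [f1]) (ideal_code n [f2]) (ideal_code n [f3])
     \<subseteq> ideal_code n (vsum_generators f1 f2 f3)"
proof
  fix c
  assume "c \<in> vsum_code n (ideal_code n [f1]) (ideal_code n [f2]) (ideal_code n [f3])"
  then obtain a b d where c: "c = vsum_word n a b d"
    and "a \<in> ideal_code n [f1]" "b \<in> ideal_code n [f2]" "d \<in> ideal_code n [f3]"
    by (auto simp: vsum_code_eq_image)
  then obtain h1 h2 h3 K1 K2 K3 where len: "length a = n" "length b = n" "length d = n"
    and abd: "Poly a = f1 * h1 + K1 * (monom 1 n - 1)" "Poly b = f2 * h2 + K2 * (monom 1 n - 1)"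
      "Poly d = f3 * h3 + K3 * (monom 1 n - 1)"
    unfolding mem_ideal_code_singleton_iff by blast
  define K where "K = smult vv (emb_poly K1) + smult (1 - vv) (emb_poly K2)
    + smult (1 - vv ^ 2) (emb_poly K3)"
  have "Poly c = sum_list (map2 (*) (vsum_generators f1 f2 f3)
      [emb_poly h1, emb_poly h2, emb_poly h3]) + K * (monom 1 n - 1)"
    unfolding c Poly_vsum_word[OF len] abd vsum_generators_def K_def
    by (simp add: emb_poly_add emb_poly_diff emb_poly_mult map_poly_monom smult_add_right
        smult_diff_right algebra_simps)
  moreover have "length c = n"
    by (simp add: c vsum_word_def)
  ultimately show "c \<in> ideal_code n (vsum_generators f1 f2 f3)"
    unfolding ideal_code_def
    by (intro CollectI conjI exI[of _ "[emb_poly h1, emb_poly h2, emb_poly h3]"] exI[of _ K])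
      (simp_all add: vsum_generators_def)
qed

lemma smult_emb_poly_mult_in_codeword_polys:
  assumes "linear_code n C" "\<And>g. smult s (emb_poly (f * g)) \<in> codeword_polys n C"
  shows "smult s (emb_poly f) * H \<in> codeword_polys n C"
proof -
  let ?A = "map_poly vr0 H" and ?B = "map_poly vr1 H" and ?D = "map_poly vr2 H"
  have "smult s (emb_poly f) * H = smult s (emb_poly (f * ?A)) + smult vv (smult s (emb_poly (f * ?B)))
      + smult (vv ^ 2) (smult s (emb_poly (f * ?D)))"
    by (subst vring_poly_decomp[of H]) (simp add: emb_poly_mult algebra_simps)
  also have "\<dots> \<in> codeword_polys n C"
    by (rule codeword_polys_add[OF assms(1) codeword_polys_add[OF assms(1) assms(2)
          codeword_polys_smult[OF assms(1) assms(2)]] codeword_polys_smult[OF assms(1) assms(2)]])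
  finally show ?thesis .
qed

lemma vsum_emb_poly_in_codeword_polys:
  fixes f1 f2 f3 :: "'a::field poly"
  assumes "n > 0"
    and "f1 dvd monom 1 n - 1" "f2 dvd monom 1 n - 1" "f3 dvd monom 1 n - 1"
  shows "smult vv (emb_poly (f1 * g1)) + smult (1 - vv) (emb_poly (f2 * g2))
      + smult (1 - vv ^ 2) (emb_poly (f3 * g3))
    \<in> codeword_polys n (vsum_code n (ideal_code n [f1]) (ideal_code n [f2]) (ideal_code n [f3]))"
proof -
  let ?Q = "monom 1 n - 1 :: 'a poly"
  obtain a b d where abd: "a \<in> ideal_code n [f1]" "b \<in> ideal_code n [f2]" "d \<in> ideal_code n [f3]"
    and red: "?Q dvd f1 * g1 - Poly a" "?Q dvd f2 * g2 - Poly b" "?Q dvd f3 * g3 - Poly d"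
    using ideal_code_principal_reduce[OF assms(1)] assms(2-4) by (metis dvd_triv_left)
  have len: "length a = n" "length b = n" "length d = n"
    using abd by (simp_all add: mem_ideal_code_singleton_iff)
  have "emb_poly ?Q dvd smult vv (emb_poly (f1 * g1 - Poly a))
      + smult (1 - vv) (emb_poly (f2 * g2 - Poly b)) + smult (1 - vv ^ 2) (emb_poly (f3 * g3 - Poly d))"
    using red by (intro dvd_add dvd_smult emb_poly_dvd)
  also have "\<dots> = (smult vv (emb_poly (f1 * g1)) + smult (1 - vv) (emb_poly (f2 * g2))
      + smult (1 - vv ^ 2) (emb_poly (f3 * g3))) - Poly (vsum_word n a b d)"
    by (simp add: Poly_vsum_word[OF len] emb_poly_diff smult_diff_right algebra_simps)
  finally have "monom 1 n - 1 dvd (smult vv (emb_poly (f1 * g1)) + smult (1 - vv) (emb_poly (f2 * g2))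
      + smult (1 - vv ^ 2) (emb_poly (f3 * g3))) - Poly (vsum_word n a b d)"
    by (simp only: emb_poly_monom_1_minus_1)
  moreover have "vsum_word n a b d
      \<in> vsum_code n (ideal_code n [f1]) (ideal_code n [f2]) (ideal_code n [f3])"
    using abd by (force simp: vsum_code_eq_image)
  ultimately show ?thesis
    by (meson Poly_in_codeword_polys codeword_polys_cong)
qed

lemma ideal_code_subset_vsum_code:
  fixes f1 f2 f3 :: "'a::field poly"
  assumes "n > 0"
    and "f1 dvd monom 1 n - 1" "f2 dvd monom 1 n - 1" "f3 dvd monom 1 n - 1"
    and "linear_code n (vsum_code n (ideal_code n [f1]) (ideal_code n [f2]) (ideal_code n [f3]))"
  shows "ideal_code n (vsum_generators f1 f2 f3)
    \<subseteq> vsum_code n (ideal_code n [f1]) (ideal_code n [f2]) (ideal_code n [f3])"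
proof (rule ideal_code_subset[OF assms(5)])
  let ?C = "vsum_code n (ideal_code n [f1]) (ideal_code n [f2]) (ideal_code n [f3])"
  have "smult vv (emb_poly (f1 * g)) \<in> codeword_polys n ?C"
    and "smult (1 - vv) (emb_poly (f2 * g)) \<in> codeword_polys n ?C"
    and "smult (1 - vv ^ 2) (emb_poly (f3 * g)) \<in> codeword_polys n ?C" for g
    using vsum_emb_poly_in_codeword_polys[OF assms(1-4), of g 0 0]
      vsum_emb_poly_in_codeword_polys[OF assms(1-4), of 0 g 0]
      vsum_emb_poly_in_codeword_polys[OF assms(1-4), of 0 0 g]
    by simp_all
  then show "g * H \<in> codeword_polys n ?C" if "g \<in> set (vsum_generators f1 f2 f3)" for g H
    using that unfolding vsum_generators_def
    by (auto intro: smult_emb_poly_mult_in_codeword_polys[OF assms(5)])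
qed

theorem theorem12:
  fixes n :: nat
    and f1 f2 f3 :: "'a::{finite, field} poly"
    and C1 C2 C3 :: "'a list set"
    and C :: "'a vring list set"
  assumes "n > 0"
    and "cyclic_code n C1" "cyclic_code n C2" "cyclic_code n C3"
    and "C1 = ideal_code n [f1]" "C2 = ideal_code n [f2]" "C3 = ideal_code n [f3]"
    and "f1 dvd monom 1 n - 1" "f2 dvd monom 1 n - 1" "f3 dvd monom 1 n - 1"
    and "C = vsum_code n C1 C2 C3"
    and "cyclic_code n C"
  shows "C = ideal_code n [[:vv:] * map_poly emb f1, [:1 - vv:] * map_poly emb f2,
                           [:1 - vv ^ 2:] * map_poly emb f3]
         \<and> card C = card (UNIV :: 'a set) ^ (3 * n - (degree f1 + degree f2 + degree f3))"
proof
  have "linear_code n C"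
    using assms(12) by (simp add: cyclic_code_def)
  then show "C = ideal_code n [[:vv:] * map_poly emb f1, [:1 - vv:] * map_poly emb f2,
                           [:1 - vv ^ 2:] * map_poly emb f3]"
    using vsum_code_subset_ideal_code ideal_code_subset_vsum_code[OF assms(1,8-10)]
    unfolding assms(5-7,11) vsum_generators_def by blast
next
  have "card C = card C1 * card C2 * card C3"
    unfolding assms(11) by (rule card_vsum_code) (auto simp: assms(5-7) ideal_code_def)
  also have "\<dots> = card (UNIV :: 'a set) ^ ((n - degree f1) + (n - degree f2) + (n - degree f3))"
    by (simp add: assms(5-7) card_ideal_code_principal[OF assms(1)] assms(8-10) power_add)
  also have "(n - degree f1) + (n - degree f2) + (n - degree f3)
      = 3 * n - (degree f1 + degree f2 + degree f3)"
    using degree_le_if_dvd_monom_1_minus_1[OF assms(1) assms(8)]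
      degree_le_if_dvd_monom_1_minus_1[OF assms(1) assms(9)]
      degree_le_if_dvd_monom_1_minus_1[OF assms(1) assms(10)] by linarith
  finally show "card C = card (UNIV :: 'a set) ^ (3 * n - (degree f1 + degree f2 + degree f3))" .
qed

end
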